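(* Let $r\ge2$ and $h_a:=e_a-f_a\in\mathbb{K}[\mathcal{S}_{r+1}]$. Let $t$ be the standard Young tableau of frame $(2,1^{r-1})\vdash r+1$ whose first row is $1,\ r+1$ and whose first column is $1,2,\ldots,r$ (from top to bottom); this is the lexicographically greatest standard tableau of this frame. Then $h_a\cdot e_t=h_a$. Moreover, for every other standard tableau $t'$ of frame $(2,1^{r-1})$, $h_a\cdot e_{t'}=0$.
   Context: $\mathbb{K}\in\{\mathbb{R},\mathbb{C}\}$; group ring product $(p\cdot q)(i)=p(q(i))$. $\tilde{\mathcal S}_r=\{p\in\mathcal{S}_{r+1}:p(r+1)=r+1\}$, $e_a=\frac1{r!}\sum_{p\in\tilde{\mathcal S}_r}\mathrm{sign}(p)p$, $f_a=\frac1{(r+1)!}\sum_{p\in\mathcal{S}_{r+1}}\mathrm{sign}(p)p$. For a Young tableau $t$ (a filling of a Young frame with $1,\ldots,r+1$, each once), $\mathcal{H}_t$ and $\mathcal{V}_t$ are the groups of permutations preserving each row, respectively each column, of $t$; the Young symmetrizer is $y_t=\sum_{p\in\mathcal{H}_t}\sum_{q\in\mathcal{V}_t}\mathrm{sign}(q)\,p\cdot q$, and $e_t=\mu_ty_t$ with the nonzero constant $\mu_t$ making $e_t$ idempotent. A tableau is standard if entries increase along rows (left to right) and down columns. Lexicographic order: $t_2>t_1$ (same frame) if, reading both tableaux simultaneously row by row from left to right and top to bottom, the first position where they differ has a larger entry in $t_2$. The frame $(2,1^{r-1})$ has a first row of two boxes followed by $r-1$ rows of one box. *)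

theory Defs
  imports "HOL-Combinatorics.Combinatorics"
begin

text \<open>Permutations of {1..n} (the symmetric group S_n), with composition as product:
  (p \<cdot> q)(i) = p (q i), i.e. p \<cdot> q = p \<circ> q.\<close>
definition perms :: "nat \<Rightarrow> (nat \<Rightarrow> nat) set" where
  "perms n = {p. p permutes {1..n}}"

text \<open>Elements of the group ring K[S_n] are represented as coefficient functions
  (nat \<Rightarrow> nat) \<Rightarrow> 'a, supported on perms n.  Product of the group ring:\<close>
definition gr_mult :: "nat \<Rightarrow> ((nat \<Rightarrow> nat) \<Rightarrow> 'a::field) \<Rightarrow> ((nat \<Rightarrow> nat) \<Rightarrow> 'a) \<Rightarrow> ((nat \<Rightarrow> nat) \<Rightarrow> 'a)" where
  "gr_mult n x y = (\<lambda>s. \<Sum>p\<in>perms n. \<Sum>q\<in>perms n. if p \<circ> q = s then x p * y q else 0)"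

definition e_a :: "nat \<Rightarrow> (nat \<Rightarrow> nat) \<Rightarrow> 'a::field" where
  "e_a r = (\<lambda>s. if s \<in> perms (r+1) \<and> s (r+1) = r+1
              then of_int (sign s) / of_nat (fact r) else 0)"

definition f_a :: "nat \<Rightarrow> (nat \<Rightarrow> nat) \<Rightarrow> 'a::field" where
  "f_a r = (\<lambda>s. if s \<in> perms (r+1) then of_int (sign s) / of_nat (fact (r+1)) else 0)"

definition h_a :: "nat \<Rightarrow> (nat \<Rightarrow> nat) \<Rightarrow> 'a::field" where
  "h_a r = (\<lambda>s. e_a r s - f_a r s)"

text \<open>Young frames are lists of row lengths; cells are (row, column), 0-indexed.\<close>
definition cells :: "nat list \<Rightarrow> (nat \<times> nat) set" where
  "cells lam = {(i, j). i < length lam \<and> j < lam ! i}"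

text \<open>A Young tableau of frame lam filled with 1..n (each once); values outside
  the frame are normalised to 0 so that tableaux are represented uniquely.\<close>
definition tableau :: "nat list \<Rightarrow> nat \<Rightarrow> (nat \<times> nat \<Rightarrow> nat) \<Rightarrow> bool" where
  "tableau lam n T \<longleftrightarrow> bij_betw T (cells lam) {1..n} \<and> (\<forall>c. c \<notin> cells lam \<longrightarrow> T c = 0)"

definition standard_tableau :: "nat list \<Rightarrow> nat \<Rightarrow> (nat \<times> nat \<Rightarrow> nat) \<Rightarrow> bool" where
  "standard_tableau lam n T \<longleftrightarrow> tableau lam n T \<and>
     (\<forall>i j. (i, Suc j) \<in> cells lam \<longrightarrow> T (i, j) < T (i, Suc j)) \<and>
     (\<forall>i j. (Suc i, j) \<in> cells lam \<longrightarrow> T (i, j) < T (Suc i, j))"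

definition row_group :: "nat list \<Rightarrow> nat \<Rightarrow> (nat \<times> nat \<Rightarrow> nat) \<Rightarrow> (nat \<Rightarrow> nat) set" where
  "row_group lam n T = {p \<in> perms n. \<forall>c\<in>cells lam. \<exists>c'\<in>cells lam. fst c' = fst c \<and> p (T c) = T c'}"

definition col_group :: "nat list \<Rightarrow> nat \<Rightarrow> (nat \<times> nat \<Rightarrow> nat) \<Rightarrow> (nat \<Rightarrow> nat) set" where
  "col_group lam n T = {p \<in> perms n. \<forall>c\<in>cells lam. \<exists>c'\<in>cells lam. snd c' = snd c \<and> p (T c) = T c'}"

definition young_sym :: "nat list \<Rightarrow> nat \<Rightarrow> (nat \<times> nat \<Rightarrow> nat) \<Rightarrow> (nat \<Rightarrow> nat) \<Rightarrow> 'a::field" where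
  "young_sym lam n T = (\<lambda>s. \<Sum>p\<in>row_group lam n T. \<Sum>q\<in>col_group lam n T.
       if p \<circ> q = s then of_int (sign q) else 0)"

definition young_mu :: "nat list \<Rightarrow> nat \<Rightarrow> (nat \<times> nat \<Rightarrow> nat) \<Rightarrow> 'a::field" where
  "young_mu lam n T = (THE \<mu>. \<mu> \<noteq> 0 \<and>
      (let e = (\<lambda>s. \<mu> * young_sym lam n T s) in gr_mult n e e = e))"

definition young_idem :: "nat list \<Rightarrow> nat \<Rightarrow> (nat \<times> nat \<Rightarrow> nat) \<Rightarrow> (nat \<Rightarrow> nat) \<Rightarrow> 'a::field" where
  "young_idem lam n T = (\<lambda>s. young_mu lam n T * young_sym lam n T s)"

definition lex_greater :: "nat list \<Rightarrow> (nat \<times> nat \<Rightarrow> nat) \<Rightarrow> (nat \<times> nat \<Rightarrow> nat) \<Rightarrow> bool" where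
  "lex_greater lam T2 T1 \<longleftrightarrow> (\<exists>c\<in>cells lam. T1 c < T2 c \<and>
      (\<forall>c'\<in>cells lam. (fst c' < fst c \<or> (fst c' = fst c \<and> snd c' < snd c)) \<longrightarrow> T2 c' = T1 c'))"

definition hook_frame :: "nat \<Rightarrow> nat list" where
  "hook_frame r = 2 # replicate (r - 1) 1"

definition t_hook :: "nat \<Rightarrow> nat \<times> nat \<Rightarrow> nat" where
  "t_hook r = (\<lambda>(i, j). if j = 0 \<and> i < r then i + 1
                       else if i = 0 \<and> j = 1 then r + 1 else 0)"

end

theory Submission
  imports Defs
begin

text \<open>Let t = t_hook r and N = r + 1. The row group of t is {id, (1 N)} and its column group is
  the stabiliser of N, so y_t = Sum_s sign(s) (\<delta>(s(N) = N) - \<delta>(s(N) = 1)) s. Both y_t and h_a have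
  the form Sum_s sign(s) \<phi>(s(N)) s with Sum_v \<phi>(v) = 0, and for every such element x, counting
  the permutations with prescribed values at one or two points gives x y_t = (r! + (r-1)!) x. Hence
  y_t^2 = (r! + (r-1)!) y_t, so e_t = y_t / (r! + (r-1)!) and h_a e_t = h_a.

  Any other standard tableau t' of the frame has first row 1, k with 2 \<le> k \<le> r. The transposition
  (1 k) lies in the row group of t' and fixes N, so h_a (1 k) = -h_a while (1 k) y_t' = y_t';
  therefore h_a y_t' = -h_a y_t' = 0.\<close>

section \<open>Permutations of {1..n}\<close>

lemma finite_perms: "finite (perms n)"
  unfolding perms_def by (simp add: finite_permutations)

lemma perms_apply_in: "p \<in> perms n \<Longrightarrow> x \<in> {1..n} \<Longrightarrow> p x \<in> {1..n}"
  unfolding perms_def by (simp only: mem_Collect_eq permutes_in_image)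

lemma perms_compose: "p \<in> perms n \<Longrightarrow> q \<in> perms n \<Longrightarrow> p \<circ> q \<in> perms n"
  unfolding perms_def by (auto intro: permutes_compose)

lemma perms_inv: "p \<in> perms n \<Longrightarrow> inv p \<in> perms n"
  unfolding perms_def by (auto intro: permutes_inv)

lemma permutation_of_perms: "p \<in> perms n \<Longrightarrow> permutation p"
  unfolding perms_def by (auto intro: permutes_imp_permutation)

lemma perms_compose_cancel_right:
  assumes "q \<in> perms n" "p \<circ> q \<in> perms n"
  shows "p \<in> perms n"
proof -
  have "p = (p \<circ> q) \<circ> inv q"
    using assms(1) by (simp add: perms_def o_assoc[symmetric] permutes_inv_o)
  then show ?thesis using assms perms_compose perms_inv by metis
qed

lemma permutes_fixing_eq:
  assumes "a \<in> S"
  shows "{p. p permutes S \<and> p a = a} = {p. p permutes (S - {a})}"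
proof safe
  fix p assume "p permutes S" "p a = a"
  then show "p permutes S - {a}" unfolding permutes_def by auto
next
  fix p assume "p permutes S - {a}"
  then show "p permutes S" by (rule permutes_subset) auto
  show "p a = a" using \<open>p permutes S - {a}\<close> by (rule permutes_not_in) simp
qed

lemma sum_permutes_maps_to:
  assumes "finite S" "a \<in> S" "b \<in> S"
  shows "(\<Sum>p | p permutes S. of_bool (p a = b) :: 'a::semiring_1) = of_nat (fact (card S - 1))"
proof -
  have "(\<Sum>p | p permutes S. of_bool (p a = b) :: 'a)
      = (\<Sum>p | p permutes S. of_bool ((transpose a b \<circ> p) a = b))"
    by (rule setum_permutations_compose_left[OF permutes_swap_id[OF assms(2,3)]])
  also have "\<dots> = (\<Sum>p | p permutes S. of_bool (p a = a))"
    by (intro sum.cong) (auto simp: transpose_eq_iff)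
  also have "\<dots> = of_nat (card {p. p permutes (S - {a})})"
    using assms permutes_fixing_eq[of a S] by (simp add: finite_permutations Collect_conj_eq[symmetric])
  finally show ?thesis
    using assms by (simp add: card_permutations)
qed

lemma sum_permutes_maps_pair_to:
  assumes "finite S" "a \<in> S" "b \<in> S" "c \<in> S" "d \<in> S" "a \<noteq> c" "b \<noteq> d"
  shows "(\<Sum>p | p permutes S. of_bool (p a = b \<and> p c = d) :: 'a::semiring_1)
       = of_nat (fact (card S - 2))"
proof -
  define d' where "d' = transpose a b d"
  have d': "d' \<in> S - {a}" "c \<in> S - {a}"
    using assms by (auto simp: d'_def transpose_def)
  have "(\<Sum>p | p permutes S. of_bool (p a = b \<and> p c = d) :: 'a)
      = (\<Sum>p | p permutes S. of_bool ((transpose a b \<circ> p) a = b \<and> (transpose a b \<circ> p) c = d))"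
    by (rule setum_permutations_compose_left[OF permutes_swap_id[OF assms(2,3)]])
  also have "\<dots> = (\<Sum>p | p permutes S. if p a = a then of_bool (p c = d') else 0)"
    by (intro sum.cong) (auto simp: transpose_eq_iff d'_def)
  also have "\<dots> = (\<Sum>p | p permutes (S - {a}). of_bool (p c = d'))"
    using permutes_fixing_eq[OF assms(2)] assms(1)
    by (simp add: sum.inter_filter[symmetric] finite_permutations conj_commute)
  also have "\<dots> = of_nat (fact (card S - 2))"
    using assms d' by (simp add: sum_permutes_maps_to numeral_2_eq_2)
  finally show ?thesis .
qed

lemma sum_perms_weight_indicator_same:
  assumes "a \<in> {1..n}" "m \<in> {1..n}"
  shows "(\<Sum>p\<in>perms n. \<phi> (p a) * of_bool (p a = m)) = of_nat (fact (n - 1)) * (\<phi> m :: 'a::comm_ring_1)"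
proof -
  have "(\<Sum>p\<in>perms n. \<phi> (p a) * of_bool (p a = m)) = \<phi> m * (\<Sum>p\<in>perms n. of_bool (p a = m))"
    by (auto simp: sum_distrib_left intro: sum.cong)
  also have "(\<Sum>p\<in>perms n. of_bool (p a = m)) = (of_nat (fact (n - 1)) :: 'a)"
    using assms sum_permutes_maps_to[of "{1..n}" a m] by (simp add: perms_def)
  finally show ?thesis by (simp add: mult.commute)
qed

lemma sum_perms_weight_indicator_other:
  assumes "a \<in> {1..n}" "c \<in> {1..n}" "m \<in> {1..n}" "a \<noteq> c"
  shows "(\<Sum>p\<in>perms n. \<phi> (p a) * of_bool (p c = m))
       = of_nat (fact (n - 2)) * (\<Sum>v\<in>{1..n} - {m}. \<phi> v :: 'a::comm_ring_1)"
proof -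
  have "(\<Sum>p\<in>perms n. \<phi> (p a) * of_bool (p c = m))
      = (\<Sum>p\<in>perms n. \<Sum>v\<in>{1..n}. \<phi> v * of_bool (p a = v \<and> p c = m))"
  proof (intro sum.cong refl)
    fix p assume "p \<in> perms n"
    then have "p a \<in> {1..n}" using assms(1) by (rule perms_apply_in)
    then show "\<phi> (p a) * of_bool (p c = m) = (\<Sum>v\<in>{1..n}. \<phi> v * of_bool (p a = v \<and> p c = m))"
      by (simp add: of_bool_conj mult.assoc[symmetric] sum_distrib_right[symmetric]
          of_bool_def if_distrib cong: if_cong)
  qed
  also have "\<dots> = (\<Sum>v\<in>{1..n}. \<phi> v * (\<Sum>p\<in>perms n. of_bool (p a = v \<and> p c = m)))"
    by (simp add: sum.swap[of _ "perms n"] sum_distrib_left)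
  also have "\<dots> = (\<Sum>v\<in>{1..n}. if v = m then 0 else \<phi> v * of_nat (fact (n - 2)))"
  proof (intro sum.cong refl)
    fix v assume v: "v \<in> {1..n}"
    show "\<phi> v * (\<Sum>p\<in>perms n. of_bool (p a = v \<and> p c = m))
        = (if v = m then 0 else \<phi> v * of_nat (fact (n - 2)))"
    proof (cases "v = m")
      case True
      have "\<not> (p a = m \<and> p c = m)" if "p \<in> perms n" for p
        using that assms(4) by (auto simp: perms_def dest: permutes_inj injD)
      then show ?thesis using True by (simp add: sum.neutral)
    next
      case False
      then show ?thesis
        using assms v sum_permutes_maps_pair_to[of "{1..n}" a v c m, where 'a='a] by (simp add: perms_def)
    qed
  qed
  also have "\<dots> = of_nat (fact (n - 2)) * (\<Sum>v\<in>{1..n} - {m}. \<phi> v)"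
    using assms(3) by (simp add: sum.delta_remove sum_distrib_left mult.commute)
  finally show ?thesis .
qed

section \<open>The group ring\<close>

lemma gr_mult_apply:
  assumes "s \<in> perms n"
  shows "gr_mult n x y s = (\<Sum>p\<in>perms n. x p * y (inv p \<circ> s))"
  unfolding gr_mult_def
proof (intro sum.cong refl)
  fix p assume p: "p \<in> perms n"
  have "p \<circ> q = s \<longleftrightarrow> q = inv p \<circ> s" for q
    using p by (auto simp: perms_def o_assoc permutes_inv_o)
  moreover have "inv p \<circ> s \<in> perms n"
    using p assms by (intro perms_compose perms_inv)
  ultimately show "(\<Sum>q\<in>perms n. if p \<circ> q = s then x p * y q else 0) = x p * y (inv p \<circ> s)"
    by (simp add: finite_perms)
qed

lemma gr_mult_outside: "s \<notin> perms n \<Longrightarrow> gr_mult n x y s = 0"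
  unfolding gr_mult_def using perms_compose by (auto intro!: sum.neutral)

lemma gr_mult_scale_left: "gr_mult n (\<lambda>s. a * x s) y = (\<lambda>s. a * gr_mult n x y s)"
  unfolding gr_mult_def by (auto simp: sum_distrib_left mult.assoc intro!: sum.cong)

lemma gr_mult_scale_right: "gr_mult n x (\<lambda>s. b * y s) = (\<lambda>s. b * gr_mult n x y s)"
  unfolding gr_mult_def by (auto simp: sum_distrib_left mult.left_commute intro!: sum.cong)

lemma gr_mult_eq_0_by_involution:
  fixes x y :: "(nat \<Rightarrow> nat) \<Rightarrow> 'a::field_char_0"
  assumes \<tau>: "\<tau> \<in> perms n" "\<tau> \<circ> \<tau> = id"
    and x: "\<And>p. x (p \<circ> \<tau>) = - x p" and y: "\<And>q. y (\<tau> \<circ> q) = y q"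
  shows "gr_mult n x y = (\<lambda>_. 0)"
proof
  fix s
  show "gr_mult n x y s = 0"
  proof (cases "s \<in> perms n")
    case True
    have inv_\<tau>: "inv (p \<circ> \<tau>) = \<tau> \<circ> inv p" if "p \<in> perms n" for p
      using that \<tau> by (metis o_inv_distrib inv_unique_comp perms_def mem_Collect_eq permutes_bij)
    have "gr_mult n x y s = (\<Sum>p\<in>perms n. x (p \<circ> \<tau>) * y (inv (p \<circ> \<tau>) \<circ> s))"
      unfolding gr_mult_apply[OF True] perms_def
      by (rule sum_permutations_compose_right) (use \<tau> in \<open>simp add: perms_def\<close>)
    also have "\<dots> = - gr_mult n x y s"
      unfolding gr_mult_apply[OF True]
      by (simp add: x y inv_\<tau> comp_assoc sum_negf[symmetric] cong: sum.cong)
    finally show ?thesis by simp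
  qed (rule gr_mult_outside)
qed

definition sign_weighted :: "nat \<Rightarrow> (nat \<Rightarrow> 'a) \<Rightarrow> (nat \<Rightarrow> nat) \<Rightarrow> 'a::field" where
  "sign_weighted n \<phi> s = (if s \<in> perms n then of_int (sign s) * \<phi> (s n) else 0)"

lemma sign_weighted_compose_right:
  assumes q: "q \<in> perms n" "q n = n"
  shows "sign_weighted n \<phi> (p \<circ> q) = of_int (sign q) * sign_weighted n \<phi> p"
proof (cases "p \<in> perms n")
  case True
  then show ?thesis
    using q perms_compose[OF True q(1)]
    by (simp add: sign_weighted_def sign_compose permutation_of_perms)
next
  case False
  then have "p \<circ> q \<notin> perms n"
    using q(1) perms_compose_cancel_right by blast
  with False show ?thesis
    by (simp add: sign_weighted_def)
qed

lemma gr_mult_sign_weighted_hook_summand: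
  assumes p: "p \<in> perms n" and s: "s \<in> perms n"
  shows "sign_weighted n \<phi> p * sign_weighted n (\<lambda>v. of_bool (v = n) - of_bool (v = 1)) (inv p \<circ> s)
       = of_int (sign s) * (\<phi> (p n) * of_bool (p n = s n) - \<phi> (p n) * of_bool (p 1 = s n))"
proof -
  have "inv p (s n) = k \<longleftrightarrow> p k = s n" for k
    using p by (auto simp: perms_def permutes_inv_eq)
  moreover have "sign (inv p \<circ> s) = sign p * sign s"
    using permutation_of_perms[OF p] permutation_of_perms[OF s]
    by (simp add: sign_compose permutation_inverse sign_inverse)
  moreover have "of_int (sign p) * of_int (sign p) = (1::'a)"
    by (simp flip: of_int_mult)
  ultimately show ?thesis
    using p perms_compose[OF perms_inv[OF p] s]
    by (simp add: sign_weighted_def right_diff_distrib mult.left_commute)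
qed

lemma gr_mult_sign_weighted_hook:
  fixes \<phi> :: "nat \<Rightarrow> 'a::field"
  assumes n: "2 \<le> n" and sum0: "(\<Sum>v\<in>{1..n}. \<phi> v) = 0"
  shows "gr_mult n (sign_weighted n \<phi>) (sign_weighted n (\<lambda>v. of_bool (v = n) - of_bool (v = 1)))
       = (\<lambda>s. of_nat (fact (n - 1) + fact (n - 2)) * sign_weighted n \<phi> s)"
proof
  fix s
  show "gr_mult n (sign_weighted n \<phi>) (sign_weighted n (\<lambda>v. of_bool (v = n) - of_bool (v = 1))) s
      = of_nat (fact (n - 1) + fact (n - 2)) * sign_weighted n \<phi> s"
  proof (cases "s \<in> perms n")
    case True
    define m where "m = s n"
    have m: "m \<in> {1..n}" using perms_apply_in[OF True] n by (simp add: m_def)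
    have sw: "sign_weighted n \<phi> s = of_int (sign s) * \<phi> m"
      using True by (simp add: sign_weighted_def m_def)
    have "gr_mult n (sign_weighted n \<phi>) (sign_weighted n (\<lambda>v. of_bool (v = n) - of_bool (v = 1))) s
      = (\<Sum>p\<in>perms n. of_int (sign s) * (\<phi> (p n) * of_bool (p n = m) - \<phi> (p n) * of_bool (p 1 = m)))"
      unfolding gr_mult_apply[OF True] m_def
      by (rule sum.cong[OF refl gr_mult_sign_weighted_hook_summand[OF _ True]])
    also have "\<dots> = of_int (sign s) * ((\<Sum>p\<in>perms n. \<phi> (p n) * of_bool (p n = m))
                           - (\<Sum>p\<in>perms n. \<phi> (p n) * of_bool (p 1 = m)))"
      by (simp only: sum_distrib_left[symmetric] sum_subtractf)
    also have "(\<Sum>p\<in>perms n. \<phi> (p n) * of_bool (p n = m)) = of_nat (fact (n - 1)) * \<phi> m"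
      using n m by (intro sum_perms_weight_indicator_same) auto
    also have "(\<Sum>p\<in>perms n. \<phi> (p n) * of_bool (p 1 = m))
             = of_nat (fact (n - 2)) * (\<Sum>v\<in>{1..n} - {m}. \<phi> v)"
      using n m by (intro sum_perms_weight_indicator_other) auto
    also have "(\<Sum>v\<in>{1..n} - {m}. \<phi> v) = - \<phi> m"
      using m sum0 by (simp add: sum_diff1)
    finally show ?thesis
      unfolding sw by (simp add: algebra_simps)
  qed (simp add: gr_mult_outside sign_weighted_def)
qed

lemma h_a_eq_sign_weighted:
  "h_a r = sign_weighted (r + 1) (\<lambda>v. of_bool (v = r + 1) / of_nat (fact r) - 1 / of_nat (fact (r + 1)))"
  by (auto simp: h_a_def e_a_def f_a_def sign_weighted_def field_simps)

lemma sum_h_a_weight_eq_0: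
  "(\<Sum>v\<in>{1..r + 1}. of_bool (v = r + 1) / of_nat (fact r) - 1 / of_nat (fact (r + 1)) :: 'a::field_char_0) = 0"
proof -
  have "(of_nat (fact (r + 1)) :: 'a) = of_nat (r + 1) * of_nat (fact r)"
    by (simp only: fact_Suc Suc_eq_plus1[symmetric] of_nat_mult of_nat_id)
  then show ?thesis
    using of_nat_neq_0[of r, where 'a='a] by (simp add: sum_subtractf of_bool_def sum.delta)
qed

section \<open>Hook tableaux\<close>

lemma cells_hook_frame:
  assumes "1 \<le> r"
  shows "c \<in> cells (hook_frame r) \<longleftrightarrow> (snd c = 0 \<and> fst c < r) \<or> c = (0, 1)"
proof -
  have "hook_frame r ! i = (if i = 0 then 2 else 1)" if "i < r" for i
    using assms that by (cases i) (auto simp: hook_frame_def)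
  then show ?thesis
    using assms by (cases c) (auto simp: cells_def hook_frame_def split: if_splits)
qed

lemma transpose_in_row_group:
  assumes T: "tableau lam n T" and c: "c \<in> cells lam" "c' \<in> cells lam" "fst c = fst c'"
  shows "transpose (T c) (T c') \<in> row_group lam n T"
proof -
  have bij: "bij_betw T (cells lam) {1..n}"
    using T by (simp add: tableau_def)
  have "transpose (T c) (T c') \<in> perms n"
    using bij_betw_apply[OF bij] c by (simp add: perms_def permutes_swap_id)
  moreover have "\<exists>d'\<in>cells lam. fst d' = fst d \<and> transpose (T c) (T c') (T d) = T d'"
    if d: "d \<in> cells lam" for d
  proof -
    have inj: "T d = T e \<longleftrightarrow> d = e" if "e \<in> cells lam" for e
      using bij d that by (auto simp: bij_betw_def inj_on_def)
    consider "d = c" | "d = c'" "d \<noteq> c" | "d \<noteq> c" "d \<noteq> c'" by blast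
    then show ?thesis
    proof cases
      case 1
      then show ?thesis using c by (intro bexI[of _ c']) auto
    next
      case 2
      then show ?thesis using c by (intro bexI[of _ c]) auto
    next
      case 3
      then show ?thesis using c d inj by (intro bexI[of _ d]) auto
    qed
  qed
  ultimately show ?thesis
    by (simp add: row_group_def)
qed

lemma row_group_compose:
  assumes "p \<in> row_group lam n T" "q \<in> row_group lam n T"
  shows "p \<circ> q \<in> row_group lam n T"
proof -
  have "\<exists>c''\<in>cells lam. fst c'' = fst c \<and> p (q (T c)) = T c''" if c: "c \<in> cells lam" for c
  proof -
    obtain c' where c': "c' \<in> cells lam" "fst c' = fst c" "q (T c) = T c'"
      using assms(2) c unfolding row_group_def by auto
    moreover obtain c'' where "c'' \<in> cells lam" "fst c'' = fst c'" "p (T c') = T c''"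
      using assms(1) c' unfolding row_group_def by auto
    ultimately show ?thesis by auto
  qed
  then show ?thesis
    using assms perms_compose unfolding row_group_def by auto
qed

lemma young_sym_row_invariant:
  assumes \<tau>: "\<tau> \<in> row_group lam n T" "\<tau> \<circ> \<tau> = id"
  shows "young_sym lam n T (\<tau> \<circ> s) = young_sym lam n T s"
  unfolding young_sym_def
proof (rule sum.reindex_bij_witness[where i="\<lambda>p. \<tau> \<circ> p" and j="\<lambda>p. \<tau> \<circ> p"])
  fix p :: "nat \<Rightarrow> nat" assume "p \<in> row_group lam n T"
  show "\<tau> \<circ> (\<tau> \<circ> p) = p"
    using \<tau>(2) by (simp add: o_assoc)
  show "\<tau> \<circ> p \<in> row_group lam n T"
    using \<tau>(1) \<open>p \<in> row_group lam n T\<close> by (rule row_group_compose)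
  have "\<tau> \<circ> p \<circ> q = s \<longleftrightarrow> p \<circ> q = \<tau> \<circ> s" for q
    using \<tau>(2) by (metis comp_assoc id_comp)
  then show "(\<Sum>q\<in>col_group lam n T. if \<tau> \<circ> p \<circ> q = s then of_int (sign q) else 0)
      = (\<Sum>q\<in>col_group lam n T. if p \<circ> q = \<tau> \<circ> s then of_int (sign q) else 0)"
    by simp
qed (use \<tau> in \<open>auto simp: o_assoc intro: row_group_compose\<close>)

locale hook =
  fixes r :: nat
  assumes two_le_r: "2 \<le> r"
begin

lemma cells: "c \<in> cells (hook_frame r) \<longleftrightarrow> (snd c = 0 \<and> fst c < r) \<or> c = (0, 1)"
  using two_le_r by (intro cells_hook_frame) simp

lemma t_hook_standard:
  "standard_tableau (hook_frame r) (r + 1) (t_hook r)"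
proof -
  have "bij_betw (t_hook r) (cells (hook_frame r)) {1..r + 1}"
  proof (rule bij_betw_byWitness[where f'="\<lambda>v. if v = r + 1 then (0, 1) else (v - 1, 0)"])
    show "\<forall>c\<in>cells (hook_frame r). (if t_hook r c = r + 1 then (0, 1) else (t_hook r c - 1, 0)) = c"
      using two_le_r by (auto simp: cells t_hook_def)
    show "\<forall>v\<in>{1..r + 1}. t_hook r (if v = r + 1 then (0, 1) else (v - 1, 0)) = v"
      using two_le_r by (auto simp: t_hook_def)
    show "t_hook r ` cells (hook_frame r) \<subseteq> {1..r + 1}"
      using two_le_r by (auto simp: cells t_hook_def)
    show "(\<lambda>v. if v = r + 1 then (0, 1) else (v - 1, 0)) ` {1..r + 1} \<subseteq> cells (hook_frame r)"
      by (auto simp: cells)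
  qed
  then show ?thesis
    using two_le_r by (auto simp: standard_tableau_def tableau_def cells t_hook_def)
qed

lemma row_group_t_hook:
  "row_group (hook_frame r) (r + 1) (t_hook r) = {id, transpose 1 (r + 1)}"
proof
  have T: "tableau (hook_frame r) (r + 1) (t_hook r)"
    using t_hook_standard by (simp add: standard_tableau_def)
  show "row_group (hook_frame r) (r + 1) (t_hook r) \<subseteq> {id, transpose 1 (r + 1)}"
  proof
    fix p assume p: "p \<in> row_group (hook_frame r) (r + 1) (t_hook r)"
    have "p x = x" if "x \<notin> {1, r + 1}" for x
    proof (cases "x \<in> {2..r}")
      case True
      \<comment> \<open>the entry x sits alone in row x - 1\<close>
      then have "(x - 1, 0) \<in> cells (hook_frame r)" by (auto simp: cells)
      with p obtain c' where "c' \<in> cells (hook_frame r)" "fst c' = x - 1" "p (t_hook r (x - 1, 0)) = t_hook r c'"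
        unfolding row_group_def by fastforce
      with True show ?thesis by (cases c') (auto simp: cells t_hook_def)
    next
      case False
      with that p show ?thesis by (auto simp: row_group_def perms_def permutes_not_in)
    qed
    moreover have "\<exists>!x. p x = y" for y
      using p by (auto simp: row_group_def perms_def permutes_def)
    ultimately have "p permutes {1, r + 1}"
      by (simp add: permutes_def)
    then show "p \<in> {id, transpose 1 (r + 1)}"
      by (simp add: permutes_doubleton_iff)
  qed
  have "id \<in> row_group (hook_frame r) (r + 1) (t_hook r)"
    by (auto simp: row_group_def perms_def)
  moreover have "transpose 1 (r + 1) \<in> row_group (hook_frame r) (r + 1) (t_hook r)"
    using transpose_in_row_group[OF T, of "(0, 0)" "(0, 1)"] two_le_r by (simp add: cells t_hook_def)
  ultimately show "{id, transpose 1 (r + 1)} \<subseteq> row_group (hook_frame r) (r + 1) (t_hook r)"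
    by simp
qed

lemma col_group_t_hook:
  "col_group (hook_frame r) (r + 1) (t_hook r) = {p \<in> perms (r + 1). p (r + 1) = r + 1}"
proof safe
  {
    fix p assume p: "p \<in> col_group (hook_frame r) (r + 1) (t_hook r)"
    then show "p \<in> perms (r + 1)"
      by (simp add: col_group_def)
    have "(0, 1) \<in> cells (hook_frame r)"
      by (simp add: cells)
    with p obtain c' where "c' \<in> cells (hook_frame r)" "snd c' = 1" "p (t_hook r (0, 1)) = t_hook r c'"
      unfolding col_group_def by fastforce
    then show "p (r + 1) = r + 1"
      by (cases c') (auto simp: cells t_hook_def)
  }
  fix p assume p: "p \<in> perms (r + 1)" "p (r + 1) = r + 1"
  have "\<exists>c'\<in>cells (hook_frame r). snd c' = snd c \<and> p (t_hook r c) = t_hook r c'"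
    if c: "c \<in> cells (hook_frame r)" for c
  proof (cases "c = (0, 1)")
    case True
    with p show ?thesis
      by (intro bexI[of _ c]) (auto simp: cells t_hook_def)
  next
    case False
    with c obtain i where i: "c = (i, 0)" "i < r"
      by (cases c) (auto simp: cells)
    have "p (i + 1) \<in> {1..r + 1}" "p (i + 1) \<noteq> p (r + 1)"
      using perms_apply_in[OF p(1)] i permutes_inj[of p "{1..r + 1}"] p(1)
      by (auto simp: perms_def inj_eq)
    then show ?thesis
      using i p(2) by (intro bexI[of _ "(p (i + 1) - 1, 0)"]) (auto simp: cells t_hook_def)
  qed
  with p(1) show "p \<in> col_group (hook_frame r) (r + 1) (t_hook r)"
    by (simp add: col_group_def)
qed

lemma young_sym_t_hook:
  "young_sym (hook_frame r) (r + 1) (t_hook r)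
       = (sign_weighted (r + 1) (\<lambda>v. of_bool (v = r + 1) - of_bool (v = 1)) :: _ \<Rightarrow> 'a::field)"
proof
  fix s :: "nat \<Rightarrow> nat"
  let ?V = "{p \<in> perms (r + 1). p (r + 1) = r + 1}"
  let ?\<tau> = "transpose 1 (r + 1)"
  have \<tau>: "?\<tau> \<in> perms (r + 1)" "?\<tau> \<circ> ?\<tau> = id" "?\<tau> \<noteq> id"
    using two_le_r by (auto simp: perms_def permutes_swap_id transpose_def fun_eq_iff)
  have finV: "finite ?V"
    by (simp add: finite_perms)
  have "?\<tau> \<circ> q = s \<longleftrightarrow> q = ?\<tau> \<circ> s" for q
    using \<tau>(2) by (metis comp_assoc id_comp)
  then have "young_sym (hook_frame r) (r + 1) (t_hook r) s
      = (\<Sum>q\<in>?V. if q = s then of_int (sign q) else 0)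
        + (\<Sum>q\<in>?V. if q = ?\<tau> \<circ> s then of_int (sign q) else 0)"
    unfolding young_sym_def row_group_t_hook col_group_t_hook using \<tau>(3) by simp
  also have "\<dots> = (if s \<in> ?V then of_int (sign s) else 0)
                   + (if ?\<tau> \<circ> s \<in> ?V then of_int (sign (?\<tau> \<circ> s)) else 0)"
    by (simp only: sum.delta[OF finV])
  also have "\<dots> = sign_weighted (r + 1) (\<lambda>v. of_bool (v = r + 1) - of_bool (v = 1)) s"
  proof (cases "s \<in> perms (r + 1)")
    case True
    have "sign (?\<tau> \<circ> s) = - sign s"
      using two_le_r True \<tau>(1) by (simp add: sign_compose permutation_of_perms sign_swap_id)
    moreover have "(?\<tau> \<circ> s) (r + 1) = r + 1 \<longleftrightarrow> s (r + 1) = 1"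
      using two_le_r by (auto simp: transpose_def)
    ultimately show ?thesis
      using True perms_compose[OF \<tau>(1) True] two_le_r by (cases "s (r + 1) = 1") (auto simp: sign_weighted_def)
  next
    case False
    moreover have "?\<tau> \<circ> s \<notin> perms (r + 1)"
      using False perms_compose[OF \<tau>(1), of "?\<tau> \<circ> s"] \<tau>(2) by (auto simp: o_assoc)
    ultimately show ?thesis
      by (simp add: sign_weighted_def)
  qed
  finally show "young_sym (hook_frame r) (r + 1) (t_hook r) s
      = sign_weighted (r + 1) (\<lambda>v. of_bool (v = r + 1) - of_bool (v = 1)) s" .
qed

lemma gr_mult_young_sym_t_hook:
  assumes "(\<Sum>v\<in>{1..r + 1}. \<phi> v) = 0"
  shows "gr_mult (r + 1) (sign_weighted (r + 1) \<phi>) (young_sym (hook_frame r) (r + 1) (t_hook r))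
       = (\<lambda>s. of_nat (fact r + fact (r - 1)) * sign_weighted (r + 1) \<phi> s)"
proof -
  have "gr_mult (r + 1) (sign_weighted (r + 1) \<phi>) (young_sym (hook_frame r) (r + 1) (t_hook r))
      = (\<lambda>s. of_nat (fact (r + 1 - 1) + fact (r + 1 - 2)) * sign_weighted (r + 1) \<phi> s)"
    unfolding young_sym_t_hook using two_le_r assms by (intro gr_mult_sign_weighted_hook) simp_all
  moreover have "r + 1 - 1 = r" "r + 1 - 2 = r - 1"
    by simp_all
  ultimately show ?thesis
    by (simp only:)
qed

lemma young_mu_t_hook:
  "(young_mu (hook_frame r) (r + 1) (t_hook r) :: 'a::field_char_0) = 1 / of_nat (fact r + fact (r - 1))"
proof -
  let ?y = "young_sym (hook_frame r) (r + 1) (t_hook r) :: _ \<Rightarrow> 'a"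
  define c where "c = (of_nat (fact r + fact (r - 1)) :: 'a)"
  have c: "c \<noteq> 0"
    unfolding c_def by (simp only: of_nat_eq_0_iff) simp
  have "(\<Sum>v\<in>{1..r + 1}. of_bool (v = r + 1) - of_bool (v = 1) :: 'a) = 0"
    by (simp add: sum_subtractf of_bool_def sum.delta)
  from gr_mult_young_sym_t_hook[OF this]
  have yy: "gr_mult (r + 1) ?y ?y = (\<lambda>s. c * ?y s)"
    unfolding young_sym_t_hook[symmetric] c_def .
  have y_id: "?y id = 1"
    unfolding young_sym_t_hook using two_le_r by (simp add: sign_weighted_def perms_def)
  let ?idem = "\<lambda>\<mu>. \<mu> \<noteq> 0 \<and> gr_mult (r + 1) (\<lambda>s. \<mu> * ?y s) (\<lambda>s. \<mu> * ?y s) = (\<lambda>s. \<mu> * ?y s)"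
  have "(THE \<mu>. ?idem \<mu>) = 1 / c"
  proof (rule the_equality)
    show "?idem (1 / c)"
      unfolding gr_mult_scale_left gr_mult_scale_right yy using c by simp
  next
    fix \<mu> :: 'a
    assume \<mu>: "?idem \<mu>"
    then have "\<mu> * (\<mu> * (c * ?y id)) = \<mu> * ?y id"
      unfolding gr_mult_scale_left gr_mult_scale_right yy by (metis mult.assoc)
    then have "\<mu> * c = 1"
      using \<mu> y_id by simp
    then show "\<mu> = 1 / c"
      using c by (simp add: field_simps)
  qed
  then show ?thesis
    unfolding young_mu_def Let_def c_def .
qed

lemma gr_mult_h_a_young_idem_t_hook:
  "gr_mult (r + 1) (h_a r) (young_idem (hook_frame r) (r + 1) (t_hook r)) = (h_a r :: _ \<Rightarrow> 'a::field_char_0)"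
proof -
  have "(of_nat (fact r + fact (r - 1)) :: 'a) \<noteq> 0"
    by (simp only: of_nat_eq_0_iff) simp
  moreover have "gr_mult (r + 1) (h_a r) (young_sym (hook_frame r) (r + 1) (t_hook r))
      = (\<lambda>s. of_nat (fact r + fact (r - 1)) * (h_a r s :: 'a))"
    unfolding h_a_eq_sign_weighted by (rule gr_mult_young_sym_t_hook[OF sum_h_a_weight_eq_0])
  ultimately show ?thesis
    unfolding young_idem_def young_mu_t_hook gr_mult_scale_right by simp
qed

end

locale hook_tableau = hook +
  fixes T :: "nat \<times> nat \<Rightarrow> nat"
  assumes standard: "standard_tableau (hook_frame r) (r + 1) T"
begin

lemma tableau: "tableau (hook_frame r) (r + 1) T"
  using standard by (simp add: standard_tableau_def)

lemma entry_in_range: "c \<in> cells (hook_frame r) \<Longrightarrow> T c \<in> {1..r + 1}"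
  using tableau by (auto simp: tableau_def dest: bij_betw_apply)

lemma entry_eq_iff:
  "c \<in> cells (hook_frame r) \<Longrightarrow> d \<in> cells (hook_frame r) \<Longrightarrow> T c = T d \<longleftrightarrow> c = d"
  using tableau by (auto simp: tableau_def bij_betw_def inj_on_def)

lemma column_increasing: "i \<le> j \<Longrightarrow> j < r \<Longrightarrow> T (i, 0) + (j - i) \<le> T (j, 0)"
proof (induction j)
  case (Suc j)
  show ?case
  proof (cases "i = Suc j")
    case False
    then have "T (i, 0) + (j - i) \<le> T (j, 0)"
      using Suc by simp
    moreover have "T (j, 0) < T (Suc j, 0)"
      using standard Suc.prems by (simp add: standard_tableau_def cells)
    ultimately show ?thesis
      using False Suc.prems by simp
  qed simp
qed simp

lemma corner_eq_1: "T (0, 0) = 1"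
proof -
  obtain c where c: "c \<in> cells (hook_frame r)" "T c = 1"
    using tableau by (force simp: tableau_def bij_betw_def)
  have "T (0, 0) \<ge> 1"
    using entry_in_range[of "(0, 0)"] two_le_r by (simp add: cells)
  moreover have "T (0, 0) \<le> T c"
  proof (cases "c = (0, 1)")
    case True
    then show ?thesis
      using standard by (simp add: standard_tableau_def cells)
  next
    case False
    then show ?thesis
      using c column_increasing[of 0 "fst c"] by (cases c) (auto simp: cells)
  qed
  ultimately show ?thesis
    using c by simp
qed

lemma arm_entry_eq_iff: "T (0, 1) = r + 1 \<longleftrightarrow> T = t_hook r"
proof
  assume arm: "T (0, 1) = r + 1"
  have "T (i, 0) = i + 1" if i: "i < r" for i
  proof -
    have "T (r - 1, 0) \<noteq> T (0, 1)"
      using entry_eq_iff[of "(r - 1, 0)" "(0, 1)"] two_le_r by (simp add: cells)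
    then have "T (r - 1, 0) \<le> r"
      using entry_in_range[of "(r - 1, 0)"] two_le_r arm by (simp add: cells)
    moreover have "T (i, 0) + (r - 1 - i) \<le> T (r - 1, 0)" "T (0, 0) + i \<le> T (i, 0)"
      using column_increasing[of 0 i] column_increasing[of i "r - 1"] i by simp_all
    ultimately show ?thesis
      using corner_eq_1 i by linarith
  qed
  then show "T = t_hook r"
    using arm standard by (auto simp: fun_eq_iff t_hook_def cells standard_tableau_def tableau_def)
qed (simp add: t_hook_def)

lemma arm_entry_bounds:
  assumes "T \<noteq> t_hook r"
  shows "2 \<le> T (0, 1)" "T (0, 1) \<le> r"
  using standard corner_eq_1 entry_in_range[of "(0, 1)"] arm_entry_eq_iff assms
  by (auto simp: standard_tableau_def cells)

lemma lex_greater_t_hook: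
  assumes "T \<noteq> t_hook r"
  shows "lex_greater (hook_frame r) (t_hook r) T"
  unfolding lex_greater_def
  using arm_entry_bounds[OF assms] corner_eq_1 two_le_r
  by (intro bexI[of _ "(0, 1)"]) (auto simp: cells t_hook_def)

lemma gr_mult_h_a_young_idem_eq_0:
  assumes "T \<noteq> t_hook r"
  shows "gr_mult (r + 1) (h_a r) (young_idem (hook_frame r) (r + 1) T) = (\<lambda>_. 0 :: 'a::field_char_0)"
proof -
  define \<tau> where "\<tau> = transpose (T (0, 0)) (T (0, 1))"
  have k: "2 \<le> T (0, 1)" "T (0, 1) \<le> r"
    using arm_entry_bounds[OF assms] by simp_all
  have \<tau>: "\<tau> \<in> perms (r + 1)" "\<tau> (r + 1) = r + 1" "sign \<tau> = -1" "\<tau> \<circ> \<tau> = id"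
    using k corner_eq_1 by (simp_all add: \<tau>_def perms_def permutes_swap_id sign_swap_id)
  have "\<tau> \<in> row_group (hook_frame r) (r + 1) T"
    unfolding \<tau>_def using two_le_r by (intro transpose_in_row_group[OF tableau]) (simp_all add: cells)
  then have "gr_mult (r + 1) (h_a r) (young_sym (hook_frame r) (r + 1) T) = (\<lambda>_. 0 :: 'a)"
    using \<tau> by (intro gr_mult_eq_0_by_involution[OF \<tau>(1,4)])
      (simp_all add: h_a_eq_sign_weighted sign_weighted_compose_right young_sym_row_invariant)
  then show ?thesis
    unfolding young_idem_def gr_mult_scale_right by simp
qed

end

theorem theorem4:
  fixes r :: nat
  assumes "r \<ge> 2"
  shows "standard_tableau (hook_frame r) (r+1) (t_hook r)
    \<and> (\<forall>T. standard_tableau (hook_frame r) (r+1) T \<and> T \<noteq> t_hook r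
            \<longrightarrow> lex_greater (hook_frame r) (t_hook r) T)
    \<and> gr_mult (r+1) (h_a r) (young_idem (hook_frame r) (r+1) (t_hook r))
        = (h_a r :: (nat \<Rightarrow> nat) \<Rightarrow> 'a::field_char_0)
    \<and> (\<forall>T. standard_tableau (hook_frame r) (r+1) T \<and> T \<noteq> t_hook r
            \<longrightarrow> gr_mult (r+1) (h_a r) (young_idem (hook_frame r) (r+1) T)
                 = (\<lambda>_. 0 :: 'a))"
proof -
  interpret hook r
    using assms by unfold_locales
  have "lex_greater (hook_frame r) (t_hook r) T
      \<and> gr_mult (r + 1) (h_a r) (young_idem (hook_frame r) (r + 1) T) = (\<lambda>_. 0 :: 'a)"
    if "standard_tableau (hook_frame r) (r + 1) T" "T \<noteq> t_hook r" for T
  proof -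
    interpret hook_tableau r T
      using that(1) by unfold_locales
    show ?thesis
      using that(2) lex_greater_t_hook gr_mult_h_a_young_idem_eq_0 by blast
  qed
  then show ?thesis
    using t_hook_standard gr_mult_h_a_young_idem_t_hook by blast
qed

end
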